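(* Suppose a torsion-free group $G$ acts on a simplicial tree $T$ with trivial edge stabilizers, $\Phi\in\mathrm{Aut}(G)$, and $t\colon T\to T$ is a $\Phi$-equivariant isometry, i.e. $t(g x)=\Phi(g)t(x)$ for all $x\in T$, $g\in G$. Assume that $t$ preserves the $G$-orbits of oriented edges, and that whenever $v$ is a vertex of $T$ with $t(v)=v$, the restriction $\Phi|_V\colon V\to V$ is neat, where $V=\mathrm{Stab}(v)$. Then $\Phi$ is neat.
   Context: An automorphism $\Psi$ of a group $H$ is neat if $\Psi^k(h)=h$ for some $k\neq 0$ and $h\in H$ implies $\Psi(h)=h$. "$t$ preserves the $G$-orbits of oriented edges" means that for every oriented edge $e$, $t(e)\in G\cdot e$ (with orientation). *)

theory Defs
  imports "HOL-Algebra.Algebra"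
begin

definition is_cycle :: "('v \<Rightarrow> 'v \<Rightarrow> bool) \<Rightarrow> 'v list \<Rightarrow> bool" where
  "is_cycle E vs \<longleftrightarrow> length vs \<ge> 3 \<and> distinct vs
     \<and> (\<forall>i. Suc i < length vs \<longrightarrow> E (vs ! i) (vs ! Suc i))
     \<and> E (last vs) (hd vs)"

definition simplicial_tree :: "('v \<Rightarrow> 'v \<Rightarrow> bool) \<Rightarrow> bool" where
  "simplicial_tree E \<longleftrightarrow> (\<forall>u v. E u v \<longrightarrow> E v u) \<and> (\<forall>v. \<not> E v v)
     \<and> (\<forall>u v. E\<^sup>*\<^sup>* u v) \<and> (\<forall>vs. \<not> is_cycle E vs)"

definition tree_isometry :: "('v \<Rightarrow> 'v \<Rightarrow> bool) \<Rightarrow> ('v \<Rightarrow> 'v) \<Rightarrow> bool" where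
  "tree_isometry E t \<longleftrightarrow> bij t \<and> (\<forall>u v. E u v \<longleftrightarrow> E (t u) (t v))"

definition torsion_free :: "('g, 'b) monoid_scheme \<Rightarrow> bool" where
  "torsion_free G \<longleftrightarrow> (\<forall>g\<in>carrier G. \<forall>n::nat. n > 0 \<and> g [^]\<^bsub>G\<^esub> n = \<one>\<^bsub>G\<^esub> \<longrightarrow> g = \<one>\<^bsub>G\<^esub>)"

definition trivial_edge_stabilizers ::
  "('g, 'b) monoid_scheme \<Rightarrow> ('g \<Rightarrow> 'v \<Rightarrow> 'v) \<Rightarrow> ('v \<Rightarrow> 'v \<Rightarrow> bool) \<Rightarrow> bool" where
  "trivial_edge_stabilizers G act E \<longleftrightarrow>
     (\<forall>u v. E u v \<longrightarrow> {g \<in> carrier G. {act g u, act g v} = {u, v}} = {\<one>\<^bsub>G\<^esub>})"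

definition aut_pow :: "('g, 'b) monoid_scheme \<Rightarrow> ('g \<Rightarrow> 'g) \<Rightarrow> int \<Rightarrow> 'g \<Rightarrow> 'g" where
  "aut_pow G Phi k = (if k \<ge> 0 then Phi ^^ nat k else (inv_into (carrier G) Phi) ^^ nat (- k))"

definition neat :: "('g, 'b) monoid_scheme \<Rightarrow> ('g \<Rightarrow> 'g) \<Rightarrow> bool" where
  "neat G Phi \<longleftrightarrow> (\<forall>h\<in>carrier G. \<forall>k::int. k \<noteq> 0 \<and> aut_pow G Phi k h = h \<longrightarrow> Phi h = h)"

end

theory Submission
  imports Defs
begin

text \<open>
  Suppose Phi^K h = h with K > 0; then h commutes with s = t^K. A periodic point v of t is
  fixed: t has a fixed point, since it preserves the finite orbit of v and inverts no edge;
  on the edge leaving a fixed point w closest to v towards v, t^N is the identity and t acts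
  like some g, so a twisted power of g is trivial, and neatness at w together with
  torsion-freeness give g = 1, contradicting the choice of w.

  If s has a fixed point w, then t fixes w and h w, and Phi h acts like h on all fixed points
  of t. Either h fixes w and neatness at w applies, or Phi h and h agree on the first edge of
  the geodesic from h w to w, so they are equal because edge stabilisers are trivial. If s has
  no fixed point, it has no periodic point and acts as a translation along its axis; t and its
  conjugate by h are commuting K-th roots of s, hence agree on the axis, and again Phi h and h
  agree on an edge.
\<close>

lemma successively_conv_nth:
  "successively P xs \<longleftrightarrow> (\<forall>i. Suc i < length xs \<longrightarrow> P (xs ! i) (xs ! Suc i))"
  by (induction P xs rule: successively.induct)
    (auto simp: nth_Cons' All_less_Suc2 less_Suc_eq_0_disj)

lemma funpow_fixed: "f x = x \<Longrightarrow> (f ^^ n) x = x"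
  by (induction n) auto

lemma funpow_commute: "(f ^^ a) ((f ^^ b) x) = (f ^^ b) ((f ^^ a) x)"
  by (metis funpow_add add.commute o_apply)

lemma funpow_inv_into_fixed:
  assumes f: "bij_betw f A A" and "x \<in> A" "(inv_into A f ^^ n) x = x"
  shows "(f ^^ n) x = x"
proof -
  have into: "(inv_into A f ^^ m) y \<in> A" if "y \<in> A" for y m
  proof (induction m)
    case (Suc m)
    then show ?case using inv_into_into[of _ f A] bij_betw_imp_surj_on[OF f] by simp
  qed (simp add: that)
  have "(f ^^ m) ((inv_into A f ^^ m) y) = y" if "y \<in> A" for y m
  proof (induction m)
    case (Suc m)
    have "(f ^^ Suc m) ((inv_into A f ^^ Suc m) y)
        = (f ^^ m) (f (inv_into A f ((inv_into A f ^^ m) y)))"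
      by (simp only: funpow_Suc_right[of m f] o_apply) simp
    also have "\<dots> = y" using bij_betw_inv_into_right[OF f into[OF that]] Suc.IH by simp
    finally show ?case .
  qed simp
  then show ?thesis using assms(2,3) by metis
qed

lemma aut_pow_fixed_imp_funpow_fixed:
  assumes "bij_betw Phi (carrier G) (carrier G)" "h \<in> carrier G" "k \<noteq> 0" "aut_pow G Phi k h = h"
  obtains N where "0 < N" "(Phi ^^ N) h = h"
proof (cases "0 < k")
  case True
  then show ?thesis using that[of "nat k"] assms(4) unfolding aut_pow_def by simp
next
  case False
  then have "(inv_into (carrier G) Phi ^^ nat (- k)) h = h" using assms(3,4) unfolding aut_pow_def
    by simp
  then show ?thesis using that[of "nat (- k)"] funpow_inv_into_fixed[OF assms(1,2)] False assms(3)
    by simp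
qed

section \<open>Distances and geodesics in a tree\<close>

lemma relpowp_tree_isometry:
  assumes "tree_isometry E f"
  shows "(E ^^ n) (f u) (f v) \<longleftrightarrow> (E ^^ n) u v"
proof (induction n arbitrary: u)
  case 0
  then show ?case using assms unfolding tree_isometry_def bij_def inj_def by auto
next
  case (Suc n)
  have "(\<exists>y. E (f u) y \<and> (E ^^ n) y (f v)) \<longleftrightarrow> (\<exists>y. E u y \<and> (E ^^ n) y v)"
    using assms Suc.IH unfolding tree_isometry_def bij_def by (metis surjD)
  then show ?case by (simp only: relpowp_Suc_left OO_def)
qed

lemma tree_isometry_id: "tree_isometry E id"
  unfolding tree_isometry_def by auto

lemma tree_isometry_comp: "tree_isometry E f \<Longrightarrow> tree_isometry E g \<Longrightarrow> tree_isometry E (f \<circ> g)"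
  unfolding tree_isometry_def using bij_comp by auto

lemma tree_isometry_funpow: "tree_isometry E f \<Longrightarrow> tree_isometry E (f ^^ n)"
  by (induction n) (auto simp: tree_isometry_id tree_isometry_comp)

lemma tree_isometry_inj: "tree_isometry E f \<Longrightarrow> f x = f y \<Longrightarrow> x = y"
  unfolding tree_isometry_def bij_def inj_def by auto

locale tree =
  fixes E :: "'v \<Rightarrow> 'v \<Rightarrow> bool"
  assumes simplicial_tree: "simplicial_tree E"
begin

lemma edge_sym: "E u v \<Longrightarrow> E v u"
  using simplicial_tree unfolding simplicial_tree_def by blast

lemma edge_irrefl: "\<not> E v v"
  using simplicial_tree unfolding simplicial_tree_def by blast

lemma connected: "E\<^sup>*\<^sup>* u v"
  using simplicial_tree unfolding simplicial_tree_def by blast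

lemma no_cycle:
  assumes "3 \<le> length vs" "distinct vs" "successively E vs" "E (last vs) (hd vs)"
  shows False
  using simplicial_tree assms unfolding simplicial_tree_def is_cycle_def successively_conv_nth
  by blast

lemma successively_rev_iff: "successively E (rev vs) \<longleftrightarrow> successively E vs"
  by (auto intro: successively_mono edge_sym)

definition dist :: "'v \<Rightarrow> 'v \<Rightarrow> nat" where
  "dist u v = (LEAST n. (E ^^ n) u v)"

lemma relpowp_dist: "(E ^^ dist u v) u v"
  unfolding dist_def using connected rtranclp_imp_relpowp by (metis LeastI_ex)

lemma dist_le: "(E ^^ n) u v \<Longrightarrow> dist u v \<le> n"
  unfolding dist_def by (rule Least_le)

lemma dist_eq_0_iff [simp]: "dist u v = 0 \<longleftrightarrow> u = v"
  using relpowp_dist[of u v] dist_le[of 0 u u] by (cases "dist u v") auto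

lemma dist_self [simp]: "dist u u = 0"
  by simp

lemma relpowp_sym: "(E ^^ n) u v \<Longrightarrow> (E ^^ n) v u"
proof (induction n arbitrary: v)
  case (Suc n)
  then obtain y where "(E ^^ n) u y" "E y v" by auto
  then show ?case using Suc.IH edge_sym by (metis relpowp_Suc_I2)
qed simp

lemma dist_commute: "dist u v = dist v u"
  by (meson antisym dist_le relpowp_dist relpowp_sym)

lemma dist_triangle: "dist u w \<le> dist u v + dist v w"
  using relpowp_dist[of u v] relpowp_dist[of v w] by (intro dist_le) (auto simp: relpowp_add)

lemma dist_eq_1_iff: "dist u v = 1 \<longleftrightarrow> E u v"
proof
  show "dist u v = 1 \<Longrightarrow> E u v" using relpowp_dist[of u v] by auto
  assume "E u v"
  then have "dist u v \<le> 1" "u \<noteq> v" using dist_le[of 1 u v] edge_irrefl by auto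
  then show "dist u v = 1" by (simp add: le_Suc_eq)
qed

lemma dist_edge_le: "E u v \<Longrightarrow> dist u r \<le> dist v r + 1"
  using dist_triangle[of u r v] dist_eq_1_iff[of u v] by simp

lemma ex_parent: "u \<noteq> r \<Longrightarrow> \<exists>y. E u y \<and> dist y r + 1 = dist u r"
proof -
  assume "u \<noteq> r"
  then obtain m where m: "dist u r = Suc m" by (cases "dist u r") auto
  then obtain y where y: "E u y" "(E ^^ m) y r" using relpowp_dist[of u r] relpowp_Suc_D2 by metis
  then show ?thesis using dist_le[OF y(2)] dist_edge_le[OF y(1), of r] m by (intro exI[of _ y]) auto
qed

text \<open>The neighbour of u one step closer to r; unspecified if u = r.\<close>
definition parent :: "'v \<Rightarrow> 'v \<Rightarrow> 'v" where
  "parent r u = (SOME y. E u y \<and> dist y r + 1 = dist u r)"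

lemma parent: "u \<noteq> r \<Longrightarrow> E u (parent r u) \<and> dist (parent r u) r + 1 = dist u r"
  unfolding parent_def using ex_parent by (rule someI_ex)

lemma dist_funpow_parent: "i \<le> dist u r \<Longrightarrow> dist ((parent r ^^ i) u) r + i = dist u r"
proof (induction i)
  case (Suc i)
  then have IH: "dist ((parent r ^^ i) u) r + i = dist u r" by simp
  then have "(parent r ^^ i) u \<noteq> r" using Suc.prems by (metis Suc_n_not_le_n add_0 dist_eq_0_iff)
  then show ?case using IH parent by fastforce
qed simp

lemma funpow_parent_edge: "i < dist u r \<Longrightarrow> E ((parent r ^^ i) u) ((parent r ^^ Suc i) u)"
proof -
  assume "i < dist u r"
  then have "(parent r ^^ i) u \<noteq> r" using dist_funpow_parent[of i u r]
    by (metis add_0 dist_eq_0_iff less_imp_le_nat less_not_refl)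
  then show ?thesis using parent by simp
qed

lemma funpow_parent_dist: "(parent r ^^ dist u r) u = r"
  using dist_funpow_parent[of "dist u r" u r] by simp

text \<open>The path climbs from y towards r until it meets the corresponding climb from z.\<close>
lemma equidistant_vertices_path:
  assumes "y \<noteq> z" and level: "dist y r = dist z r"
  obtains P where "successively E P" "distinct P" "hd P = y" "last P = z" "3 \<le> length P"
    "\<And>p. p \<in> set P \<Longrightarrow> p \<noteq> y \<Longrightarrow> p \<noteq> z \<Longrightarrow> dist p r < dist y r"
proof -
  define n where "n = dist y r"
  define PY where "PY i = (parent r ^^ i) y" for i
  define PZ where "PZ i = (parent r ^^ i) z" for i
  have dist_PY: "dist (PY i) r = n - i" if "i \<le> n" for i
    using that dist_funpow_parent[of i y r] unfolding PY_def n_def by simp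
  have dist_PZ: "dist (PZ i) r = n - i" if "i \<le> n" for i
    using that dist_funpow_parent[of i z r] level unfolding PZ_def n_def by simp
  have edge_PY: "E (PY i) (PY (Suc i))" if "i < n" for i
    using that funpow_parent_edge[of i y r] unfolding PY_def n_def by simp
  have edge_PZ: "E (PZ i) (PZ (Suc i))" if "i < n" for i
    using that funpow_parent_edge[of i z r] level unfolding PZ_def n_def by simp
  define j where "j = (LEAST i. PY i = PZ i)"
  have "PY n = PZ n" using funpow_parent_dist level unfolding PY_def PZ_def n_def by metis
  then have j: "PY j = PZ j" "j \<le> n" unfolding j_def by (auto intro: LeastI Least_le)
  have before_j: "PY i \<noteq> PZ i" if "i < j" for i using that not_less_Least unfolding j_def by blast
  have "0 < j" using j(1) \<open>y \<noteq> z\<close> unfolding PY_def PZ_def by (cases j) auto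
  define D where "D = rev (map PZ [0..<Suc j])"
  define P where "P = map PY [0..<j] @ D"
  have D: "D \<noteq> []" "hd D = PZ j" "last D = z"
    unfolding D_def
      by (simp, simp add: hd_rev, simp add: last_rev upt_conv_Cons PZ_def del: upt_Suc)
  have "successively E (map PZ [0..<Suc j])"
    using edge_PZ j(2) by (auto simp: successively_conv_nth simp del: upt_Suc)
  then have "successively E D" unfolding D_def by (simp only: successively_rev_iff)
  moreover have "successively E (map PY [0..<j])"
    using edge_PY j(2) by (auto simp: successively_conv_nth)
  moreover have "E (PY (j - 1)) (PZ j)"
    using edge_PY[of "j - 1"] j \<open>0 < j\<close> by simp
  moreover have "last (map PY [0..<j]) = PY (j - 1)" using \<open>0 < j\<close> by (cases j) auto
  ultimately have "successively E P"
    using D unfolding P_def by (simp add: successively_append_iff del: successively_rev)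
  moreover have "distinct P"
  proof -
    have "inj_on PY {0..<j}"
    proof (rule inj_onI)
      fix a b assume "a \<in> {0..<j}" "b \<in> {0..<j}" "PY a = PY b"
      then have "a \<le> n" "b \<le> n" using j(2) by auto
      moreover have "n - a = n - b" using calculation dist_PY[of a] dist_PY[of b] \<open>PY a = PY b\<close>
        by simp
      ultimately show "a = b" by linarith
    qed
    moreover have "inj_on PZ {0..<Suc j}"
    proof (rule inj_onI)
      fix a b assume "a \<in> {0..<Suc j}" "b \<in> {0..<Suc j}" "PZ a = PZ b"
      then have "a \<le> n" "b \<le> n" using j(2) by auto
      moreover have "n - a = n - b" using calculation dist_PZ[of a] dist_PZ[of b] \<open>PZ a = PZ b\<close>
        by simp
      ultimately show "a = b" by linarith
    qed
    moreover have "PY a \<noteq> PZ b" if "a < j" "b \<le> j" for a b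
    proof
      assume "PY a = PZ b"
      moreover have "a \<le> n" "b \<le> n" using that j(2) by auto
      ultimately have "n - a = n - b" using dist_PY[of a] dist_PZ[of b] by simp
      then have "a = b" using \<open>a \<le> n\<close> \<open>b \<le> n\<close> by linarith
      then show False using before_j that \<open>PY a = PZ b\<close> by blast
    qed
    ultimately show ?thesis unfolding P_def D_def by (auto simp: distinct_map simp del: upt_Suc)
  qed
  moreover have "hd P = y" using \<open>0 < j\<close> unfolding P_def PY_def by (simp add: upt_conv_Cons)
  moreover have "last P = z" using D unfolding P_def by simp
  moreover have "3 \<le> length P" using \<open>0 < j\<close> unfolding P_def D_def by simp
  moreover have "dist p r < dist y r" if "p \<in> set P" "p \<noteq> y" "p \<noteq> z" for p
  proof -
    obtain i where "i \<le> j" "p = PY i \<or> p = PZ i"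
    proof -
      consider i where "i < j" "p = PY i" | i where "i < Suc j" "p = PZ i"
        using \<open>p \<in> set P\<close> unfolding P_def D_def by (auto simp del: upt_Suc)
      then show thesis
      proof cases
        case (1 i)
        then show thesis using that[of i] by simp
      next
        case (2 i)
        then show thesis using that[of i] by simp
      qed
    qed
    moreover have "i \<noteq> 0" using calculation that(2,3) unfolding PY_def PZ_def by (cases i) auto
    ultimately show ?thesis using dist_PY dist_PZ j(2) unfolding n_def by auto
  qed
  ultimately show ?thesis using that by blast
qed

text \<open>A path avoiding lower levels would close up a cycle with the one through the common
  ancestor of y and z.\<close>
lemma path_between_equidistant_passes_closer:
  assumes path: "successively E (y # B @ [z])" and distinct: "distinct (y # B @ [z])"
    and level: "dist y r = dist z r"
  shows "\<exists>b\<in>set B. dist b r < dist y r"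
proof (rule ccontr)
  assume "\<not> ?thesis"
  then have far: "dist y r \<le> dist b r" if "b \<in> set B" for b using that by force
  obtain P where P: "successively E P" "distinct P" "hd P = y" "last P = z" "3 \<le> length P"
    and lower: "\<And>p. p \<in> set P \<Longrightarrow> p \<noteq> y \<Longrightarrow> p \<noteq> z \<Longrightarrow> dist p r < dist y r"
    using equidistant_vertices_path[OF _ level] distinct by auto
  define C where "C = P @ rev B"
  have "successively E (rev B)" "B \<noteq> [] \<Longrightarrow> E z (last B)"
    using path by (auto simp: successively_append_iff successively_Cons successively_rev_iff
        simp del: successively_rev intro: edge_sym)
  then have "successively E C"
    using P unfolding C_def
      by (auto simp: successively_append_iff hd_rev simp del: successively_rev)
  moreover have "distinct C"
  proof -
    have "p \<notin> set B" if "p \<in> set P" for p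
      using distinct lower[OF that] far[of p] by (cases "p = y \<or> p = z") auto
    then show ?thesis using P(2) distinct unfolding C_def by auto
  qed
  moreover have "E (last C) (hd C)"
  proof -
    have "hd C = y" using P(3,5) unfolding C_def by (cases P) auto
    moreover have "last C = (if B = [] then z else hd B)" using P(4) unfolding C_def
      by (simp add: last_rev)
    ultimately show ?thesis
      using path by (cases B) (auto simp: successively_append_iff intro: edge_sym)
  qed
  moreover have "3 \<le> length C" using P(5) unfolding C_def by simp
  ultimately show False using no_cycle by blast
qed

lemma edge_dist_neq: "E x y \<Longrightarrow> dist x r \<noteq> dist y r"
  using path_between_equidistant_passes_closer[of x "[]" y r] edge_irrefl by force

lemma edge_dist_cases: "E x y \<Longrightarrow> dist x r = dist y r + 1 \<or> dist y r = dist x r + 1"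
  using edge_dist_neq[of x y r] dist_edge_le[of x y r] dist_edge_le[of y x r] edge_sym by force

lemma parent_unique:
  assumes "E x y" "E x z" "dist y r + 1 = dist x r" "dist z r + 1 = dist x r"
  shows "y = z"
proof (rule ccontr)
  assume "y \<noteq> z"
  moreover have "x \<noteq> y" "x \<noteq> z" using assms by auto
  ultimately show False
    using path_between_equidistant_passes_closer[of y "[x]" z r] assms edge_sym by auto
qed

lemma parent_eqI:
  assumes "E x y" "dist y r < dist x r"
  shows "parent r x = y"
proof -
  have "dist y r + 1 = dist x r" "x \<noteq> r" using edge_dist_cases[OF assms(1), of r] assms(2) by auto
  then show ?thesis using parent[of x r] parent_unique[of x "parent r x" y r] assms(1) by simp
qed

lemma dist_tree_isometry: "tree_isometry E f \<Longrightarrow> dist (f u) (f v) = dist u v"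
  unfolding dist_def by (simp add: relpowp_tree_isometry)

lemma parent_tree_isometry:
  assumes f: "tree_isometry E f" and "x \<noteq> r"
  shows "f (parent r x) = parent (f r) (f x)"
proof -
  have "E (f x) (f (parent r x))" using parent[OF \<open>x \<noteq> r\<close>] f unfolding tree_isometry_def by blast
  moreover have "dist (f (parent r x)) (f r) < dist (f x) (f r)"
    using parent[OF \<open>x \<noteq> r\<close>] dist_tree_isometry[OF f] by simp
  ultimately show ?thesis by (rule parent_eqI[symmetric])
qed

lemma dist_through_far_endpoint:
  "E m y \<Longrightarrow> dist y r < dist m r \<Longrightarrow> dist x m < dist x y \<Longrightarrow> dist x r = dist x m + dist m r"
proof (induction "dist x m" arbitrary: m y)
  case 0
  then show ?case by simp
next
  case (Suc k)
  then have "m \<noteq> x" by force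
  define m' where "m' = parent x m"
  have m': "E m m'" "dist m' x + 1 = dist m x" using parent[OF \<open>m \<noteq> x\<close>] unfolding m'_def by auto
  then have dist_xm': "dist x m' = k" using Suc.hyps(2) dist_commute[of x] by simp
  then have "m' \<noteq> y" using Suc.prems(3) Suc.hyps(2) by auto
  have "dist m r < dist m' r"
  proof (rule ccontr)
    assume "\<not> dist m r < dist m' r"
    then have "dist m' r < dist m r" using edge_dist_cases[OF m'(1), of r] by auto
    then show False using parent_eqI[OF m'(1)] parent_eqI[OF Suc.prems(1,2)] \<open>m' \<noteq> y\<close> by simp
  qed
  then have "dist x r = dist x m' + dist m' r"
    using Suc.hyps(1)[of m' m] dist_xm' Suc.hyps(2) edge_sym[OF m'(1)] by simp
  moreover have "dist m' r = dist m r + 1"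
    using edge_dist_cases[OF m'(1), of r] \<open>dist m r < dist m' r\<close> by auto
  ultimately show ?case using dist_xm' Suc.hyps(2) by simp
qed

lemma parent_between:
  assumes "m \<noteq> a" "dist a m + dist m b = dist a b"
  shows "parent b a = parent m a"
proof -
  have p: "E a (parent m a)" "dist (parent m a) m + 1 = dist a m"
    using parent[of a m] assms(1) dist_commute[of a m] by auto
  have "dist (parent m a) b \<le> dist (parent m a) m + dist m b" by (rule dist_triangle)
  then have "dist (parent m a) b < dist a b" using p(2) assms(2) by linarith
  then show ?thesis using parent_eqI[OF p(1)] by simp
qed

lemma geodesic_point_unique:
  "dist a m1 + dist m1 b = dist a b \<Longrightarrow> dist a m2 + dist m2 b = dist a b \<Longrightarrow>
   dist m1 b = dist m2 b \<Longrightarrow> m1 = m2"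
proof (induction "dist m1 b" arbitrary: m1 m2)
  case 0
  then show ?case by simp
next
  case (Suc k)
  have "m1 \<noteq> b" "m2 \<noteq> b" using Suc.hyps(2) Suc.prems(3) by force+
  define q1 where "q1 = parent b m1"
  define q2 where "q2 = parent b m2"
  have p1: "E m1 q1" "dist q1 b + 1 = dist m1 b" using parent \<open>m1 \<noteq> b\<close> unfolding q1_def by auto
  have p2: "E m2 q2" "dist q2 b + 1 = dist m2 b" using parent \<open>m2 \<noteq> b\<close> unfolding q2_def by auto
  have step: "dist a q + dist q b = dist a b" "dist m a + 1 = dist q a"
    if "E m q" "dist q b + 1 = dist m b" "dist a m + dist m b = dist a b" for m q
  proof -
    have "dist m q = 1" using that(1) dist_eq_1_iff by simp
    then have "dist a q \<le> dist a m + 1" using dist_triangle[of a q m] by simp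
    moreover have "dist a b \<le> dist a q + dist q b" by (rule dist_triangle)
    ultimately show "dist a q + dist q b = dist a b" using that(2,3) by linarith
    then show "dist m a + 1 = dist q a" using that(2,3) dist_commute[of m a] dist_commute[of q a]
      by linarith
  qed
  note s1 = step[OF p1 Suc.prems(1)] and s2 = step[OF p2 Suc.prems(2)]
  have "q1 = q2" using Suc.hyps(1)[of q1 q2] s1 s2 p1 p2 Suc.hyps(2) Suc.prems(3) by simp
  then show ?case using parent_unique[of q1 m1 m2 a] s1 s2 p1 p2 edge_sym by simp
qed

lemma nonbacktracking_walk_recedes_step:
  assumes walk: "\<And>i. E (w i) (w (Suc i))" and nonbacktracking: "\<And>i. w (Suc (Suc i)) \<noteq> w i"
    and "dist (w (Suc j)) x = dist (w j) x + 1"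
  shows "dist (w (Suc (Suc j))) x = dist (w (Suc j)) x + 1"
proof (rule ccontr)
  assume "\<not> ?thesis"
  then have "dist (w (Suc (Suc j))) x < dist (w (Suc j)) x"
    using edge_dist_cases[OF walk[of "Suc j"], of x] by auto
  then have "parent x (w (Suc j)) = w (Suc (Suc j))" using parent_eqI walk by blast
  moreover have "parent x (w (Suc j)) = w j" using parent_eqI walk edge_sym assms(3) by simp
  ultimately show False using nonbacktracking by metis
qed

lemma dist_nonbacktracking_walk:
  assumes walk: "\<And>i. E (w i) (w (Suc i))" and nonbacktracking: "\<And>i. w (Suc (Suc i)) \<noteq> w i"
  shows "dist (w 0) (w j) = j"
proof -
  have "dist (w (Suc j)) (w 0) = dist (w j) (w 0) + 1" for j
  proof (induction j)
    case 0
    then show ?case using walk[of 0] dist_eq_1_iff edge_sym by simp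
  qed (use nonbacktracking_walk_recedes_step[of w, OF walk nonbacktracking] in blast)
  then have "dist (w j) (w 0) = j" by (induction j) auto
  then show ?thesis by (simp add: dist_commute)
qed

lemma nonbacktracking_walk_recedes:
  assumes walk: "\<And>i. E (w i) (w (Suc i))" and nonbacktracking: "\<And>i. w (Suc (Suc i)) \<noteq> w i"
  obtains j0 where "\<And>i. dist (w (j0 + i)) x = dist (w j0) x + i"
proof -
  obtain j0 where j0: "dist (w (Suc j0)) x = dist (w j0) x + 1"
  proof (rule ccontr)
    assume "\<not> thesis"
    then have "dist (w (Suc j)) x + 1 = dist (w j) x" for j
      using that edge_dist_cases[OF walk[of j], of x] by force
    then have "dist (w j) x + j = dist (w 0) x" for j by (induction j) (auto, metis add_Suc)
    from this[of "Suc (dist (w 0) x)"] show False by simp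
  qed
  have "dist (w (Suc (j0 + i))) x = dist (w (j0 + i)) x + 1" for i
    using nonbacktracking_walk_recedes_step[of w, OF walk nonbacktracking] j0 by (induction i) auto
  then have "dist (w (j0 + i)) x = dist (w j0) x + i" for i by (induction i) auto
  then show ?thesis using that by blast
qed

text \<open>The vertices minimising the largest distance to a finite set S are pairwise adjacent;
  an isometry preserving S permutes them, so it fixes one of them unless it inverts an edge.\<close>
lemma tree_isometry_fixed_point:
  assumes "finite S" "S \<noteq> {}" and f: "tree_isometry E f" and "f ` S = S"
    and no_inversion: "\<And>u v. E u v \<Longrightarrow> f u = v \<Longrightarrow> f v = u \<Longrightarrow> False"
  obtains z where "f z = z"
proof -
  define rad where "rad x = Max ((\<lambda>s. dist x s) ` S)" for x
  have rad_ge: "s \<in> S \<Longrightarrow> dist x s \<le> rad x" for x s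
    unfolding rad_def using \<open>finite S\<close> by auto
  have rad_less: "(\<And>s. s \<in> S \<Longrightarrow> dist x s < R) \<Longrightarrow> rad x < R" for x R
    unfolding rad_def using \<open>finite S\<close> \<open>S \<noteq> {}\<close> by auto
  obtain x0 where x0: "\<And>y. rad x0 \<le> rad y"
    using ex_has_least_nat[of "\<lambda>_. True" undefined rad] by blast
  have rad_f: "rad (f x) = rad x" for x
  proof -
    have "(\<lambda>s. dist (f x) s) ` S = (\<lambda>s. dist (f x) s) ` f ` S" using \<open>f ` S = S\<close> by simp
    also have "\<dots> = (\<lambda>s. dist x s) ` S" using dist_tree_isometry[OF f] by (auto simp: image_image)
    finally show ?thesis unfolding rad_def by simp
  qed
  have central_adjacent: "E x y" if "rad x = rad x0" "rad y = rad x0" "x \<noteq> y" for x y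
  proof (rule ccontr)
    assume "\<not> E x y"
    then have "2 \<le> dist x y" using \<open>x \<noteq> y\<close> dist_eq_1_iff[of x y] by (cases "dist x y") auto
    define m where "m = parent x y"
    have m: "E y m" "dist m x + 1 = dist y x" using parent \<open>x \<noteq> y\<close> unfolding m_def by auto
    then have "dist x m < dist x y" "0 < dist x m" using \<open>2 \<le> dist x y\<close> dist_commute by auto
    have "rad m < rad x0"
    proof (rule rad_less)
      fix s assume "s \<in> S"
      show "dist m s < rad x0"
      proof (cases "dist m s < dist y s")
        case True then show ?thesis using rad_ge[OF \<open>s \<in> S\<close>, of y] that by simp
      next
        case False
        then have "dist y s < dist m s" using edge_dist_cases[OF m(1), of s] by auto
        then have "dist x s = dist x m + dist m s"
          using dist_through_far_endpoint[of m y s x] m(1) edge_sym \<open>dist x m < dist x y\<close> by blast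
        then show ?thesis using rad_ge[OF \<open>s \<in> S\<close>, of x] \<open>0 < dist x m\<close> that(1) by linarith
      qed
    qed
    then show False using x0[of m] by simp
  qed
  consider "f x0 = x0" | "f (f x0) = f x0" | "f x0 \<noteq> x0" "f (f x0) \<noteq> f x0" by blast
  then show ?thesis
  proof cases
    case 3
    have "E x0 (f x0)" "E (f x0) (f (f x0))" using central_adjacent rad_f 3 by metis+
    moreover from this have "f (f x0) \<noteq> x0" using no_inversion by blast
    moreover from this have "E (f (f x0)) x0" using central_adjacent rad_f by metis
    ultimately have "successively E [x0, f x0, f (f x0)]" "distinct [x0, f x0, f (f x0)]"
        "E (last [x0, f x0, f (f x0)]) (hd [x0, f x0, f (f x0)])"
      using 3 by auto
    then show ?thesis using no_cycle[of "[x0, f x0, f (f x0)]"] by simp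
  qed (use that in blast)+
qed

end

section \<open>Isometries without periodic points\<close>

locale hyperbolic_isometry = tree E for E :: "'v \<Rightarrow> 'v \<Rightarrow> bool" +
  fixes s :: "'v \<Rightarrow> 'v"
  assumes s_isometry: "tree_isometry E s"
    and no_periodic_point: "0 < j \<Longrightarrow> (s ^^ j) x \<noteq> x"
begin

definition translation_length :: nat where
  "translation_length = (LEAST l. \<exists>x. dist x (s x) = l)"

definition min_set :: "'v set" where
  "min_set = {x. dist x (s x) = translation_length}"

definition axis_step :: "'v \<Rightarrow> 'v" where
  "axis_step x = parent (s x) x"

definition centralizes :: "('v \<Rightarrow> 'v) \<Rightarrow> bool" where
  "centralizes f \<longleftrightarrow> tree_isometry E f \<and> (\<forall>x. f (s x) = s (f x))"

lemma translation_length_le: "translation_length \<le> dist x (s x)"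
  unfolding translation_length_def by (rule Least_le) blast

lemma min_set_nonempty: obtains x where "x \<in> min_set"
  using LeastI_ex[of "\<lambda>l. \<exists>x. dist x (s x) = l"] unfolding min_set_def translation_length_def
    by blast

lemma s_neq: "s x \<noteq> x"
  using no_periodic_point[of 1 x] by simp

lemma translation_length_pos: "0 < translation_length"
proof -
  obtain x where "x \<in> min_set" by (rule min_set_nonempty)
  then have "dist x (s x) = translation_length" "s x \<noteq> x" using s_neq[of x] unfolding min_set_def
    by auto
  then show ?thesis by (metis dist_eq_0_iff gr0I)
qed

lemma axis_step_edge: "E x (axis_step x)"
  unfolding axis_step_def using parent[of x "s x"] s_neq[of x] by simp

lemma dist_axis_step: "dist (axis_step x) (s x) + 1 = dist x (s x)"
  unfolding axis_step_def using parent[of x "s x"] s_neq[of x] by simp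

lemma axis_step_min_set: "x \<in> min_set \<Longrightarrow> axis_step x \<in> min_set"
proof -
  assume x: "x \<in> min_set"
  have "dist (s x) (s (axis_step x)) = 1"
    using dist_tree_isometry[OF s_isometry] axis_step_edge[of x] dist_eq_1_iff by simp
  then have "dist (axis_step x) (s (axis_step x)) \<le> translation_length"
    using dist_triangle[of "axis_step x" "s (axis_step x)" "s x"] dist_axis_step[of x] x
    unfolding min_set_def by simp
  then show ?thesis using translation_length_le[of "axis_step x"] unfolding min_set_def by simp
qed

lemma funpow_axis_step_min_set: "x \<in> min_set \<Longrightarrow> (axis_step ^^ i) x \<in> min_set"
  by (induction i) (auto simp: axis_step_min_set)

lemma funpow_axis_step_segment:
  assumes x: "x \<in> min_set" and "i \<le> translation_length"
  shows "dist x ((axis_step ^^ i) x) = i \<and> dist ((axis_step ^^ i) x) (s x) = translation_length - i"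
  using \<open>i \<le> translation_length\<close>
proof (induction i)
  case 0
  then show ?case using x unfolding min_set_def by simp
next
  case (Suc i)
  define w where "w = (axis_step ^^ i) x"
  have w: "w \<in> min_set" "dist x w = i" "dist w (s x) = translation_length - i"
    using Suc funpow_axis_step_min_set[OF x] unfolding w_def by auto
  then have "w \<noteq> s x" using Suc.prems by force
  have "dist (s x) (s w) = i" using dist_tree_isometry[OF s_isometry] w(2) by simp
  then have "dist w (s x) + dist (s x) (s w) = dist w (s w)"
    using w Suc.prems unfolding min_set_def by simp
  then have "axis_step w = parent (s x) w"
    using parent_between[of "s x" w "s w"] \<open>w \<noteq> s x\<close> unfolding axis_step_def by simp
  then have step: "E w (axis_step w)" "dist (axis_step w) (s x) = translation_length - Suc i"
    using parent[OF \<open>w \<noteq> s x\<close>] w(3) by auto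
  have "dist x (axis_step w) \<le> Suc i"
    using dist_triangle[of x "axis_step w" w] w(2) dist_eq_1_iff[of w "axis_step w"] step(1) by simp
  moreover have "translation_length \<le> dist x (axis_step w) + (translation_length - Suc i)"
    using dist_triangle[of x "s x" "axis_step w"] step(2) x unfolding min_set_def by simp
  ultimately show ?case using step(2) Suc.prems unfolding w_def by simp
qed

lemma funpow_axis_step_translation_length: "x \<in> min_set \<Longrightarrow> (axis_step ^^ translation_length) x = s x"
  using funpow_axis_step_segment[of x translation_length] by simp

lemma funpow_axis_step_mult_translation_length:
  "x \<in> min_set \<Longrightarrow> (axis_step ^^ (m * translation_length)) x = (s ^^ m) x"
proof (induction m arbitrary: x)
  case (Suc m)
  have "(axis_step ^^ (Suc m * translation_length)) x
      = (axis_step ^^ (m * translation_length)) ((axis_step ^^ translation_length) x)"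
    by (simp only: mult_Suc add.commute[of translation_length] funpow_add o_apply)
  also have "\<dots> = (s ^^ m) (s x)"
    using Suc funpow_axis_step_translation_length axis_step_min_set funpow_axis_step_min_set
      by metis
  finally show ?case by (simp add: funpow_swap1)
qed simp

lemma axis_step_inj:
  assumes "x \<in> min_set" "y \<in> min_set" "axis_step x = axis_step y"
  shows "x = y"
proof -
  obtain k where "translation_length = Suc k" using translation_length_pos gr0_implies_Suc by blast
  then have "s x = s y"
    using funpow_axis_step_translation_length assms by (metis funpow_Suc_right o_apply)
  then show ?thesis using tree_isometry_inj[OF s_isometry] by blast
qed

lemma funpow_axis_step_inj:
  "x \<in> min_set \<Longrightarrow> y \<in> min_set \<Longrightarrow> (axis_step ^^ j) x = (axis_step ^^ j) y \<Longrightarrow> x = y"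
proof (induction j arbitrary: x y)
  case (Suc j)
  then show ?case using axis_step_inj axis_step_min_set by (simp only: funpow_Suc_right o_apply)
qed simp

lemma funpow_axis_step_neq: "x \<in> min_set \<Longrightarrow> 0 < j \<Longrightarrow> (axis_step ^^ j) x \<noteq> x"
proof
  assume x: "x \<in> min_set" and "0 < j" and "(axis_step ^^ j) x = x"
  then have "((axis_step ^^ j) ^^ n) x = x" for n by (induction n) auto
  then have "(axis_step ^^ (j * translation_length)) x = x" by (metis funpow_mult mult.commute)
  then have "(s ^^ j) x = x" using funpow_axis_step_mult_translation_length[OF x, of j] by simp
  then show False using no_periodic_point \<open>0 < j\<close> by blast
qed

lemma dist_funpow_axis_step:
  assumes "x \<in> min_set"
  shows "dist x ((axis_step ^^ j) x) = j"
proof -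
  have "(axis_step ^^ Suc (Suc i)) x \<noteq> (axis_step ^^ i) x" for i
    using funpow_axis_step_neq[OF funpow_axis_step_min_set[OF assms, of i], of 2]
    by (simp add: eval_nat_numeral)
  then show ?thesis using dist_nonbacktracking_walk[of "\<lambda>i. (axis_step ^^ i) x" j] axis_step_edge
    by simp
qed

lemma funpow_axis_step_eq_iff: "x \<in> min_set \<Longrightarrow> (axis_step ^^ a) x = (axis_step ^^ b) x \<longleftrightarrow> a = b"
  using dist_funpow_axis_step[of x a] dist_funpow_axis_step[of x b] by metis

text \<open>The ray from x' eventually recedes from x, say from b on; then b lies on the geodesic
  from x to a suitable power of s applied to b, as does the point at the same distance
  on the ray from x.\<close>
lemma axis_step_orbits_meet:
  assumes x: "x \<in> min_set" and x': "x' \<in> min_set"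
  obtains i j where "(axis_step ^^ i) x = (axis_step ^^ j) x'"
proof -
  define y where "y j = (axis_step ^^ j) x'" for j
  have "y (Suc (Suc j)) \<noteq> y j" for j
    using funpow_axis_step_eq_iff[OF x', of "Suc (Suc j)" j] unfolding y_def by simp
  then obtain j0 where recede: "\<And>i. dist (y (j0 + i)) x = dist (y j0) x + i"
    using nonbacktracking_walk_recedes[of y x] axis_step_edge unfolding y_def by auto
  define b where "b = y j0"
  define \<rho> where "\<rho> = dist x b"
  define N where "N = \<rho> * translation_length"
  have "b \<in> min_set" unfolding b_def y_def using funpow_axis_step_min_set[OF x'] .
  have "\<rho> \<le> N" unfolding N_def using translation_length_pos by simp
  define b' where "b' = (s ^^ \<rho>) b"
  have "b' = y (j0 + N)"
    using funpow_axis_step_mult_translation_length[OF \<open>b \<in> min_set\<close>, of \<rho>]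
    unfolding b'_def b_def y_def N_def by (simp add: funpow_add funpow_commute)
  then have dist_xb': "dist x b' = \<rho> + N" using recede[of N] dist_commute unfolding \<rho>_def b_def
    by simp
  have dist_bb': "dist b b' = N"
    using funpow_axis_step_mult_translation_length[OF \<open>b \<in> min_set\<close>, of \<rho>]
      dist_funpow_axis_step[OF \<open>b \<in> min_set\<close>, of N]
    unfolding b'_def N_def by simp
  define c where "c = (axis_step ^^ \<rho>) x"
  have "c \<in> min_set" unfolding c_def using funpow_axis_step_min_set[OF x] .
  have dist_xc: "dist x c = \<rho>" unfolding c_def using dist_funpow_axis_step[OF x] .
  have "(axis_step ^^ (N - \<rho>)) c = (axis_step ^^ N) x"
    using \<open>\<rho> \<le> N\<close> unfolding c_def by (metis funpow_add le_add_diff_inverse2 o_apply)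
  then have "(s ^^ \<rho>) x = (axis_step ^^ (N - \<rho>)) c"
    using funpow_axis_step_mult_translation_length[OF x, of \<rho>] unfolding N_def by simp
  then have "dist c ((s ^^ \<rho>) x) = N - \<rho>" using dist_funpow_axis_step[OF \<open>c \<in> min_set\<close>] by simp
  moreover have "dist ((s ^^ \<rho>) x) b' = \<rho>"
    unfolding b'_def \<rho>_def using dist_tree_isometry[OF tree_isometry_funpow[OF s_isometry]] by simp
  ultimately have "dist c b' \<le> N" using dist_triangle[of c b' "(s ^^ \<rho>) x"] \<open>\<rho> \<le> N\<close> by simp
  moreover have "\<rho> + N \<le> \<rho> + dist c b'" using dist_triangle[of x b' c] dist_xb' dist_xc by simp
  ultimately have "dist c b' = N" by simp
  then have "b = c" using geodesic_point_unique[of x b b' c] dist_bb' dist_xc dist_xb' \<rho>_def by simp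
  then show ?thesis using that unfolding b_def c_def y_def by metis
qed

lemma centralizes_min_set: "centralizes f \<Longrightarrow> x \<in> min_set \<Longrightarrow> f x \<in> min_set"
  unfolding centralizes_def min_set_def using dist_tree_isometry[of f x "s x"] by simp

lemma centralizes_funpow_min_set: "centralizes f \<Longrightarrow> x \<in> min_set \<Longrightarrow> (f ^^ n) x \<in> min_set"
  by (induction n) (auto simp: centralizes_min_set)

lemma centralizes_axis_step: "centralizes f \<Longrightarrow> f (axis_step x) = axis_step (f x)"
  unfolding centralizes_def axis_step_def using parent_tree_isometry[of f x "s x"] s_neq[of x]
    by simp

lemma centralizes_funpow_axis_step:
  "centralizes f \<Longrightarrow> f ((axis_step ^^ i) x) = (axis_step ^^ i) (f x)"
  by (induction i) (auto simp: centralizes_axis_step)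

lemma centralizes_s: "centralizes s"
  unfolding centralizes_def using s_isometry by simp

text \<open>On the minimal set the two roots differ only by shifts along the axis (the same for
  all points); comparing K-th powers shows that the shifts coincide.\<close>
lemma centralizing_roots_agree:
  assumes f1: "centralizes f1" and f2: "centralizes f2" and "0 < K"
    and root1: "\<And>x. (f1 ^^ K) x = s x" and root2: "\<And>x. (f2 ^^ K) x = s x"
    and x0: "x0 \<in> min_set"
  shows "f1 x0 = f2 x0"
proof -
  note commute1 = centralizes_funpow_axis_step[OF f1]
    and commute2 = centralizes_funpow_axis_step[OF f2]
  obtain a b where ab: "(axis_step ^^ a) (f1 x0) = (axis_step ^^ b) (f2 x0)"
    using axis_step_orbits_meet[OF centralizes_min_set[OF f1 x0] centralizes_min_set[OF f2 x0]]
      by blast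
  have shift: "(axis_step ^^ a) (f1 z) = (axis_step ^^ b) (f2 z)" if z: "z \<in> min_set" for z
  proof -
    obtain p q where pq: "(axis_step ^^ p) x0 = (axis_step ^^ q) z"
      using axis_step_orbits_meet[OF x0 z] by blast
    have "(axis_step ^^ q) ((axis_step ^^ a) (f1 z)) = (axis_step ^^ p) ((axis_step ^^ a) (f1 x0))"
      using pq commute1 funpow_commute by metis
    also have "\<dots> = (axis_step ^^ q) ((axis_step ^^ b) (f2 z))"
      using ab pq commute2 funpow_commute by metis
    finally show ?thesis
      using funpow_axis_step_inj funpow_axis_step_min_set centralizes_min_set f1 f2 z by metis
  qed
  have "(axis_step ^^ (a * r)) ((f1 ^^ r) x0) = (axis_step ^^ (b * r)) ((f2 ^^ r) x0)" for r
  proof (induction r)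
    case (Suc r)
    have "(axis_step ^^ (a * Suc r)) ((f1 ^^ Suc r) x0)
        = (axis_step ^^ (a * r)) ((axis_step ^^ a) (f1 ((f1 ^^ r) x0)))"
      by (simp add: funpow_add mult_Suc_right funpow_commute)
    also have "\<dots> = (axis_step ^^ (a * r)) ((axis_step ^^ b) (f2 ((f1 ^^ r) x0)))"
      using shift[OF centralizes_funpow_min_set[OF f1 x0]] by simp
    also have "\<dots> = (axis_step ^^ b) (f2 ((axis_step ^^ (b * r)) ((f2 ^^ r) x0)))"
      using Suc.IH commute2 funpow_commute by metis
    also have "\<dots> = (axis_step ^^ (b * Suc r)) ((f2 ^^ Suc r) x0)"
      using commute2 by (simp add: funpow_add mult_Suc_right funpow_commute)
    finally show ?case .
  qed simp
  from this[of K] have "(axis_step ^^ (a * K)) (s x0) = (axis_step ^^ (b * K)) (s x0)"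
    using root1 root2 by simp
  then have "a = b"
    using funpow_axis_step_eq_iff[OF centralizes_min_set[OF centralizes_s x0]] \<open>0 < K\<close> by simp
  then show ?thesis
    using ab funpow_axis_step_inj centralizes_min_set f1 f2 x0 by metis
qed

end

section \<open>Twisted actions on trees\<close>

locale twisted_tree_action = group G + tree E
  for G :: "('g, 'b) monoid_scheme" (structure) and E :: "'v \<Rightarrow> 'v \<Rightarrow> bool" +
  fixes act :: "'g \<Rightarrow> 'v \<Rightarrow> 'v" and Phi :: "'g \<Rightarrow> 'g" and t :: "'v \<Rightarrow> 'v"
  assumes G_torsion_free: "torsion_free G"
    and action: "group_action G UNIV act"
    and act_isometry: "g \<in> carrier G \<Longrightarrow> tree_isometry E (act g)"
    and edge_stabilizers_trivial: "trivial_edge_stabilizers G act E"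
    and Phi_iso: "Phi \<in> iso G G"
    and t_isometry: "tree_isometry E t"
    and t_equivariant: "g \<in> carrier G \<Longrightarrow> t (act g x) = act (Phi g) (t x)"
    and t_preserves_edge_orbits: "E u v \<Longrightarrow> \<exists>g\<in>carrier G. t u = act g u \<and> t v = act g v"
    and neat_at_fixed_vertex: "t v = v \<Longrightarrow> neat (G\<lparr>carrier := stabilizer G act v\<rparr>) Phi"
begin

sublocale Phi: group_hom G G Phi
  using Phi_iso unfolding iso_def by (simp add: group_hom_def group_hom_axioms_def is_group)

lemma funpow_Phi_closed [simp]: "g \<in> carrier G \<Longrightarrow> (Phi ^^ n) g \<in> carrier G"
  by (induction n) auto

lemma funpow_Phi_inv: "g \<in> carrier G \<Longrightarrow> (Phi ^^ n) (inv g) = inv ((Phi ^^ n) g)"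
  by (induction n) auto

lemma act_mult: "a \<in> carrier G \<Longrightarrow> b \<in> carrier G \<Longrightarrow> act (a \<otimes> b) x = act a (act b x)"
  using group_action.composition_rule[OF action] by simp

lemma act_one [simp]: "act \<one> x = x"
  using group_action.id_eq_one[OF action] by (metis UNIV_I restrict_apply')

lemma act_inv_act [simp]: "g \<in> carrier G \<Longrightarrow> act (inv g) (act g x) = x"
  using act_mult[of "inv g" g x] by simp

lemma act_act_inv [simp]: "g \<in> carrier G \<Longrightarrow> act g (act (inv g) x) = x"
  using act_mult[of g "inv g" x] by simp

lemma stabilizes_edge_imp_one:
  assumes "E u v" "g \<in> carrier G" "{act g u, act g v} = {u, v}"
  shows "g = \<one>"
proof -
  have "g \<in> {g \<in> carrier G. {act g u, act g v} = {u, v}}" using assms(2,3) by simp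
  then show ?thesis using edge_stabilizers_trivial assms(1) unfolding trivial_edge_stabilizers_def
    by blast
qed

lemma fixes_edge_imp_one: "E u v \<Longrightarrow> g \<in> carrier G \<Longrightarrow> act g u = u \<Longrightarrow> act g v = v \<Longrightarrow> g = \<one>"
  using stabilizes_edge_imp_one by simp

text \<open>On the edge t acts like some g, which would swap its ends and hence be trivial.\<close>
lemma t_no_inversion:
  assumes "E u v" "t u = v" "t v = u"
  shows False
proof -
  obtain g where g: "g \<in> carrier G" "t u = act g u" "t v = act g v"
    using t_preserves_edge_orbits[OF assms(1)] by blast
  moreover have "{act g u, act g v} = {u, v}" using g assms(2,3) by (simp add: insert_commute)
  ultimately have "g = \<one>" using stabilizes_edge_imp_one[OF assms(1)] by blast
  then show False using g assms edge_irrefl by simp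
qed

lemma funpow_t_act: "g \<in> carrier G \<Longrightarrow> (t ^^ n) (act g x) = act ((Phi ^^ n) g) ((t ^^ n) x)"
  by (induction n) (auto simp: t_equivariant)

lemma Phi_fixed_in_fixed_stabilizer:
  assumes "t w = w" "g \<in> carrier G" "act g w = w" "0 < N" "(Phi ^^ N) g = g"
  shows "Phi g = g"
proof -
  have "g \<in> stabilizer G act w" unfolding stabilizer_def using assms by simp
  moreover have "aut_pow (G\<lparr>carrier := stabilizer G act w\<rparr>) Phi (int N) g = g"
    unfolding aut_pow_def using assms by simp
  moreover have "int N \<noteq> 0" using \<open>0 < N\<close> by simp
  moreover have "\<forall>h\<in>stabilizer G act w. \<forall>k. k \<noteq> 0 \<and> aut_pow (G\<lparr>carrier := stabilizer G act w\<rparr>) Phi k h = h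
      \<longrightarrow> Phi h = h"
    using neat_at_fixed_vertex[OF assms(1)] unfolding neat_def by simp
  ultimately show ?thesis by blast
qed

text \<open>Phi^(j-1)(g) \<dots> Phi(g) g, which acts like t^j wherever g acts like t.\<close>
primrec twisted_pow :: "'g \<Rightarrow> nat \<Rightarrow> 'g" where
  "twisted_pow g 0 = \<one>"
| "twisted_pow g (Suc j) = Phi (twisted_pow g j) \<otimes> g"

lemma twisted_pow_closed [simp]: "g \<in> carrier G \<Longrightarrow> twisted_pow g j \<in> carrier G"
  by (induction j) auto

lemma twisted_pow_Suc': "g \<in> carrier G \<Longrightarrow> twisted_pow g (Suc j) = (Phi ^^ j) g \<otimes> twisted_pow g j"
proof (induction j)
  case (Suc j)
  then show ?case by (simp add: m_assoc)
qed simp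

lemma twisted_pow_Phi_fixed: "g \<in> carrier G \<Longrightarrow> Phi g = g \<Longrightarrow> twisted_pow g j = g [^] j"
  by (induction j) (auto simp: nat_pow_Suc2 Phi.hom_nat_pow)

lemma funpow_t_twisted_pow:
  assumes "g \<in> carrier G" "t y = act g y"
  shows "(t ^^ j) y = act (twisted_pow g j) y"
proof (induction j)
  case (Suc j)
  then show ?case using assms by (simp add: t_equivariant act_mult)
qed simp

lemma twisted_pow_eq_one_imp_one:
  assumes g: "g \<in> carrier G" and "t w = w" "act g w = w" "0 < N" and "twisted_pow g N = \<one>"
  shows "g = \<one>"
proof -
  have "(Phi ^^ N) g = g"
    using twisted_pow_Suc'[OF g, of N] \<open>twisted_pow g N = \<one>\<close> g by simp
  then have "Phi g = g" using Phi_fixed_in_fixed_stabilizer assms by blast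
  then have "g [^] N = \<one>" using twisted_pow_Phi_fixed[OF g] \<open>twisted_pow g N = \<one>\<close> by simp
  then show ?thesis using G_torsion_free g \<open>0 < N\<close> unfolding torsion_free_def by blast
qed

lemma t_fixed_point_if_periodic:
  assumes "0 < N" "(t ^^ N) v = v"
  obtains z where "t z = z"
proof -
  define S where "S = range (\<lambda>i. (t ^^ i) v)"
  have "(t ^^ m) v \<in> (\<lambda>i. (t ^^ i) v) ` {..<N}" for m
  proof (rule image_eqI)
    show "(t ^^ m) v = (t ^^ (m mod N)) v" by (rule funpow_mod_eq[OF assms(2), symmetric])
  qed (simp add: \<open>0 < N\<close>)
  then have "S \<subseteq> (\<lambda>i. (t ^^ i) v) ` {..<N}" unfolding S_def by blast
  then have "finite S" by (rule finite_subset) simp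
  have "t ` S \<subseteq> S"
  proof (rule image_subsetI)
    fix x assume "x \<in> S"
    then obtain i where "x = (t ^^ i) v" unfolding S_def by blast
    then have "t x = (t ^^ Suc i) v" by simp
    then show "t x \<in> S" unfolding S_def by blast
  qed
  moreover have "(t ^^ i) v \<in> t ` S" for i
  proof -
    have "t ((t ^^ (i + N - 1)) v) = (t ^^ (i + N)) v"
      using \<open>0 < N\<close> funpow.simps(2)[of "i + N - 1" t] by simp
    also have "\<dots> = (t ^^ i) v" using assms(2) by (simp add: funpow_add)
    finally have "(t ^^ i) v = t ((t ^^ (i + N - 1)) v)" ..
    then show ?thesis unfolding S_def by (rule image_eqI) simp
  qed
  ultimately have "t ` S = S" unfolding S_def by blast
  show thesis
  proof (rule tree_isometry_fixed_point[OF \<open>finite S\<close> _ t_isometry \<open>t ` S = S\<close>])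
    show "S \<noteq> {}" unfolding S_def by simp
  qed (use t_no_inversion that in blast)+
qed

text \<open>If t v \<noteq> v, take a fixed point w of t closest to v and the next vertex u towards v: t^N
  fixes the edge wu, on which t acts like some g, so the twisted power of g of order N
  is trivial, whence g is trivial and t fixes u.\<close>
lemma periodic_point_fixed:
  assumes "0 < N" "(t ^^ N) v = v"
  shows "t v = v"
proof (rule ccontr)
  assume "t v \<noteq> v"
  obtain z where "t z = z" using t_fixed_point_if_periodic[OF assms] .
  then obtain w where w: "t w = w" and closest: "\<And>y. t y = y \<Longrightarrow> dist w v \<le> dist y v"
    using ex_has_least_nat[of "\<lambda>w. t w = w" z "\<lambda>w. dist w v"] by metis
  then have "w \<noteq> v" using \<open>t v \<noteq> v\<close> by auto
  define u where "u = parent v w"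
  have u: "E w u" "dist u v < dist w v" using parent[OF \<open>w \<noteq> v\<close>] unfolding u_def by auto
  have "(t ^^ N) w = w" using w by (rule funpow_fixed)
  then have "(t ^^ N) u = u"
    using parent_tree_isometry[OF tree_isometry_funpow[OF t_isometry] \<open>w \<noteq> v\<close>] assms(2)
    unfolding u_def by simp
  obtain g where g: "g \<in> carrier G" "t w = act g w" "t u = act g u"
    using t_preserves_edge_orbits[OF u(1)] by blast
  have "twisted_pow g N = \<one>"
    using fixes_edge_imp_one[OF u(1)] funpow_t_twisted_pow[OF g(1)] g
      \<open>(t ^^ N) w = w\<close> \<open>(t ^^ N) u = u\<close>
    by simp
  then have "g = \<one>" using twisted_pow_eq_one_imp_one g w \<open>0 < N\<close> by simp
  then have "t u = u" using g by simp
  then show False using closest[of u] u(2) by simp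
qed

lemma act_eq_on_edge_imp_eq:
  assumes "E u v" "a \<in> carrier G" "b \<in> carrier G" "act a u = act b u" "act a v = act b v"
  shows "a = b"
proof -
  have "act (inv b \<otimes> a) u = u" "act (inv b \<otimes> a) v = v"
    using assms act_mult[of "inv b" a] by simp_all
  then have "inv b \<otimes> a = \<one>" using fixes_edge_imp_one[OF assms(1)] assms(2,3) by simp
  then show ?thesis using assms(2,3) by (metis inv_equality inv_inv inv_closed)
qed

lemma funpow_t_commute_act:
  "h \<in> carrier G \<Longrightarrow> (Phi ^^ K) h = h \<Longrightarrow> (t ^^ K) (act h x) = act h ((t ^^ K) x)"
  using funpow_t_act by simp

lemma Phi_fixed_if_funpow_t_fixed_point:
  assumes h: "h \<in> carrier G" and "0 < K" "(Phi ^^ K) h = h" and "(t ^^ K) w = w"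
  shows "Phi h = h"
proof -
  have "t w = w" using periodic_point_fixed \<open>0 < K\<close> \<open>(t ^^ K) w = w\<close> .
  have moved_fixed: "t (act h z) = act h z" if "t z = z" for z
  proof (rule periodic_point_fixed[OF \<open>0 < K\<close>])
    show "(t ^^ K) (act h z) = act h z"
      using funpow_t_commute_act[OF h \<open>(Phi ^^ K) h = h\<close>] funpow_fixed[of t z K] that by simp
  qed
  have agree: "act (Phi h) z = act h z" if "t z = z" for z
    using t_equivariant[OF h, of z] moved_fixed[OF that] that by simp
  show ?thesis
  proof (cases "act h w = w")
    case True
    then show ?thesis using Phi_fixed_in_fixed_stabilizer \<open>t w = w\<close> h \<open>0 < K\<close> \<open>(Phi ^^ K) h = h\<close>
      by blast
  next
    case False
    define q where "q = parent w (act h w)"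
    have "E (act h w) q" using parent[OF False] unfolding q_def by simp
    moreover have "t (act h w) = act h w" using moved_fixed[OF \<open>t w = w\<close>] .
    moreover have "t q = q"
      using parent_tree_isometry[OF t_isometry False] \<open>t w = w\<close> calculation(2) unfolding q_def
        by simp
    ultimately show ?thesis using act_eq_on_edge_imp_eq agree h by simp
  qed
qed

text \<open>Both t and its conjugate by h are K-th roots of t^K commuting with t^K, so they agree
  on the axis of t^K, which makes Phi h and h agree on an edge.\<close>
lemma Phi_fixed_if_funpow_t_fixed_point_free:
  assumes h: "h \<in> carrier G" and "0 < K" "(Phi ^^ K) h = h" and no_fixed: "\<And>x. (t ^^ K) x \<noteq> x"
  shows "Phi h = h"
proof -
  have inv_h: "inv h \<in> carrier G" "(Phi ^^ K) (inv h) = inv h"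
    using h \<open>(Phi ^^ K) h = h\<close> by (simp_all add: funpow_Phi_inv)
  interpret hyperbolic_isometry E "t ^^ K"
  proof
    show "tree_isometry E (t ^^ K)" using tree_isometry_funpow[OF t_isometry] .
    show "((t ^^ K) ^^ j) x \<noteq> x" if "0 < j" for j x
    proof
      assume "((t ^^ K) ^^ j) x = x"
      then have "t x = x" using periodic_point_fixed[of "K * j"] \<open>0 < K\<close> that
        by (simp add: funpow_mult)
      then show False using no_fixed[of x] funpow_fixed[of t x K] by simp
    qed
  qed
  define t' where "t' x = act (inv h) (t (act h x))" for x
  have "centralizes t"
    unfolding centralizes_def using t_isometry by (simp add: funpow_swap1)
  moreover have "centralizes t'"
    unfolding centralizes_def
  proof
    have "t' = act (inv h) \<circ> t \<circ> act h" unfolding t'_def by auto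
    then show "tree_isometry E t'" using tree_isometry_comp act_isometry h inv_h t_isometry by metis
    show "\<forall>x. t' ((t ^^ K) x) = (t ^^ K) (t' x)"
      unfolding t'_def
      using funpow_t_commute_act[OF h \<open>(Phi ^^ K) h = h\<close>, symmetric]
        funpow_t_commute_act[OF inv_h]
      by (simp add: funpow_swap1)
  qed
  moreover have "(t' ^^ n) x = act (inv h) ((t ^^ n) (act h x))" for n x
    using h by (induction n) (auto simp: t'_def)
  then have "(t' ^^ K) x = (t ^^ K) x" for x
    using funpow_t_commute_act[OF h \<open>(Phi ^^ K) h = h\<close>] h by simp
  moreover obtain x0 where "x0 \<in> min_set" by (rule min_set_nonempty)
  ultimately have "t x = t' x" if "x = x0 \<or> x = axis_step x0" for x
    using centralizing_roots_agree[of t t' K] axis_step_min_set \<open>0 < K\<close> that by blast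
  then have "act (Phi h) (t x) = act h (t x)" if "x = x0 \<or> x = axis_step x0" for x
    using that t_equivariant[OF h, of x] h unfolding t'_def by (metis act_act_inv)
  moreover have "E (t x0) (t (axis_step x0))"
    using axis_step_edge t_isometry unfolding tree_isometry_def by blast
  ultimately show ?thesis using act_eq_on_edge_imp_eq h by simp
qed

lemma Phi_fixed_if_Phi_periodic:
  assumes "h \<in> carrier G" "0 < K" "(Phi ^^ K) h = h"
  shows "Phi h = h"
proof (cases "\<exists>w. (t ^^ K) w = w")
  case True
  then show ?thesis using Phi_fixed_if_funpow_t_fixed_point assms by blast
next
  case False
  then show ?thesis using Phi_fixed_if_funpow_t_fixed_point_free assms by blast
qed

end

theorem proposition7p1:
  fixes G :: "('g, 'b) monoid_scheme"
    and act :: "'g \<Rightarrow> 'v \<Rightarrow> 'v"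
    and E :: "'v \<Rightarrow> 'v \<Rightarrow> bool"
    and Phi :: "'g \<Rightarrow> 'g"
    and t :: "'v \<Rightarrow> 'v"
  assumes "group G"
    and "torsion_free G"
    and "simplicial_tree E"
    and "group_action G UNIV act"
    and "\<And>g. g \<in> carrier G \<Longrightarrow> tree_isometry E (act g)"
    and "trivial_edge_stabilizers G act E"
    and "Phi \<in> iso G G"
    and "tree_isometry E t"
    and "\<And>g x. g \<in> carrier G \<Longrightarrow> t (act g x) = act (Phi g) (t x)"
    and "\<And>u v. E u v \<Longrightarrow> \<exists>g\<in>carrier G. t u = act g u \<and> t v = act g v"
    and "\<And>v. t v = v \<Longrightarrow> neat (G\<lparr>carrier := stabilizer G act v\<rparr>) Phi"
  shows "neat G Phi"
proof -
  interpret twisted_tree_action G E act Phi t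
    using assms by (intro twisted_tree_action.intro tree.intro twisted_tree_action_axioms.intro)
  have Phi_bij: "bij_betw Phi (carrier G) (carrier G)" using \<open>Phi \<in> iso G G\<close> unfolding iso_def
    by simp
  show ?thesis
    unfolding neat_def
  proof (intro ballI allI impI)
    fix h k assume "h \<in> carrier G" "k \<noteq> 0 \<and> aut_pow G Phi k h = h"
    then obtain N where "0 < N" "(Phi ^^ N) h = h"
      using aut_pow_fixed_imp_funpow_fixed[OF Phi_bij] by blast
    then show "Phi h = h" using Phi_fixed_if_Phi_periodic \<open>h \<in> carrier G\<close> by blast
  qed
qed

end
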